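(* Let $N\ge 2$ be even and consider the Clos network $C_{N,3}$. Let $X_1$ consist of $N/2$ flows from $I_1$ to $O_1$ and $N/2$ flows from $I_2$ to $O_2$; let $X_2$ consist of $N/2$ flows from $I_1$ to $O_2$; let $Y_2$ consist of $N/2$ flows from $I_3$ to $O_1$ and $N/2$ flows from $I_3$ to $O_2$; all flows have demand $1$, and distinct flows incident to a common input (resp. output) switch use distinct source (resp. destination) servers of that switch. Let $X=X_1\cup X_2$ and $Y=X_1\cup Y_2$, and let $\mathcal{M}=\{M_1,\dots,M_N\}$. Then: (P1) in every link-disjoint routing of $X$, the $N/2$ flows $(I_1,O_1)$ are assigned to $N/2$ distinct middle switches forming a set $\mathcal{N}$, and the $N/2$ flows $(I_2,O_2)$ are assigned to distinct middle switches forming the same set $\mathcal{N}$; (P2) in every link-disjoint routing of $Y$, the $N/2$ flows $(I_1,O_1)$ are assigned to $N/2$ distinct middle switches forming a set $\mathcal{N}$, and the $N/2$ flows $(I_2,O_2)$ are assigned to distinct middle switches forming the set $\mathcal{M}\setminus\mathcal{N}$. Consequently, no routing of $X_1$ satisfies both the restriction of (P1) and of (P2) to $X_1$.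
   Context: Clos network $C_{N,R}$: a directed graph with $N$ middle switches $M_1,\dots,M_N$, $R$ input switches $I_1,\dots,I_R$, $R$ output switches $O_1,\dots,O_R$, source servers $s_i^k$ attached to $I_i$ and destination servers $t_i^k$ attached to $O_i$ ($k\in[N]$), with edges $s_i^kI_i$, $I_iM_m$, $M_mO_i$, $O_it_i^k$. A routing assigns each flow a single middle switch (i.e. a path input switch – middle switch – output switch). A routing is link-disjoint if no link $I_iM_m$ or $M_mO_j$ is used by two flows. *)

theory Defs
  imports Main
begin

text \<open>A flow (all flows have demand 1) is a quadruple (i, a, j, b): it goes from source server
s_i^a (attached to input switch I_i) to destination server t_j^b (attached to output switch O_j).\<close>

type_synonym flow = "nat \<times> nat \<times> nat \<times> nat"

definition in_sw :: "flow \<Rightarrow> nat" where "in_sw f = fst f"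
definition out_sw :: "flow \<Rightarrow> nat" where "out_sw f = fst (snd (snd f))"

definition middles :: "nat \<Rightarrow> nat set" where "middles N = {1..N}"

definition routing :: "nat \<Rightarrow> flow set \<Rightarrow> (flow \<Rightarrow> nat) \<Rightarrow> bool" where
  "routing N F r \<longleftrightarrow> (\<forall>f\<in>F. r f \<in> middles N)"

text \<open>Link-disjoint: no link I_i M_m or M_m O_j is used by two distinct flows.\<close>
definition link_disjoint :: "nat \<Rightarrow> flow set \<Rightarrow> (flow \<Rightarrow> nat) \<Rightarrow> bool" where
  "link_disjoint N F r \<longleftrightarrow> routing N F r \<and>
     (\<forall>f\<in>F. \<forall>g\<in>F. f \<noteq> g \<longrightarrow>
        \<not> (in_sw f = in_sw g \<and> r f = r g) \<and> \<not> (out_sw f = out_sw g \<and> r f = r g))"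

text \<open>The flow sets of the construction (servers indexed 1..N at every switch).\<close>
definition F11 :: "nat \<Rightarrow> flow set" where
  "F11 N = {(1, k, 1, k) | k. 1 \<le> k \<and> k \<le> N div 2}"
definition F22 :: "nat \<Rightarrow> flow set" where
  "F22 N = {(2, k, 2, k) | k. 1 \<le> k \<and> k \<le> N div 2}"
definition X1 :: "nat \<Rightarrow> flow set" where "X1 N = F11 N \<union> F22 N"
definition X2 :: "nat \<Rightarrow> flow set" where
  "X2 N = {(1, N div 2 + k, 2, N div 2 + k) | k. 1 \<le> k \<and> k \<le> N div 2}"
definition Y2 :: "nat \<Rightarrow> flow set" where
  "Y2 N = {(3, k, 1, N div 2 + k) | k. 1 \<le> k \<and> k \<le> N div 2}
        \<union> {(3, N div 2 + k, 2, N div 2 + k) | k. 1 \<le> k \<and> k \<le> N div 2}"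
definition Xset :: "nat \<Rightarrow> flow set" where "Xset N = X1 N \<union> X2 N"
definition Yset :: "nat \<Rightarrow> flow set" where "Yset N = X1 N \<union> Y2 N"

end

theory Submission
  imports Defs
begin

text \<open>Every flow set of the construction has N/2 flows, so two disjoint ones that share an input
or an output switch saturate the N middle switches of that switch in a link-disjoint routing:
their middle-switch sets are complementary. In X the flows (I_1,O_1) and (I_2,O_2) are both
complementary to X_2, hence use the same middle switches. In Y the flows (I_1,O_1) are
complementary to the flows (I_3,O_1), the flows (I_2,O_2) to the flows (I_3,O_2), and these two
are complementary to each other, which makes (I_1,O_1) and (I_2,O_2) complementary. Since
N/2 > 0 a set cannot equal its own complement, so no routing of X_1 satisfies both.\<close>

lemma image_eq_complement_if_card_saturates:
  assumes "finite M" "finite A" "finite B" "A \<inter> B = {}" "card A + card B = card M"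
    and "inj_on r (A \<union> B)" "r ` (A \<union> B) \<subseteq> M"
  shows "r ` B = M - r ` A"
proof -
  have "card (r ` (A \<union> B)) = card M"
    using assms(2-6) by (simp add: card_image card_Un_disjoint)
  then have "r ` (A \<union> B) = M"
    using assms(1,7) by (simp add: card_subset_eq)
  moreover have "r ` A \<inter> r ` B = {}"
    using assms(4,6) by (auto simp: inj_on_def)
  ultimately show ?thesis by auto
qed

definition share_switch :: "flow set \<Rightarrow> bool" where
  "share_switch S \<longleftrightarrow> (\<exists>c. \<forall>f\<in>S. in_sw f = c) \<or> (\<exists>c. \<forall>f\<in>S. out_sw f = c)"

lemma link_disjoint_inj_on_share_switch:
  assumes "link_disjoint N F r" "S \<subseteq> F" "share_switch S"
  shows "inj_on r S"
  using assms unfolding link_disjoint_def share_switch_def inj_on_def by (metis subsetD)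

lemma link_disjoint_image_subset_middles:
  assumes "link_disjoint N F r" "S \<subseteq> F"
  shows "r ` S \<subseteq> middles N"
  using assms unfolding link_disjoint_def routing_def by blast

lemma link_disjoint_complementary_images:
  assumes "link_disjoint N F r" "A \<union> B \<subseteq> F" "share_switch (A \<union> B)"
    and "finite A" "finite B" "A \<inter> B = {}" "card A + card B = N"
  shows "r ` B = middles N - r ` A"
proof (rule image_eq_complement_if_card_saturates)
  show "inj_on r (A \<union> B)"
    using assms(1-3) by (rule link_disjoint_inj_on_share_switch)
  show "r ` (A \<union> B) \<subseteq> middles N"
    using assms(1,2) by (rule link_disjoint_image_subset_middles)
qed (use assms(4-7) in \<open>simp_all add: middles_def\<close>)

definition flow_bundle :: "nat \<Rightarrow> nat \<Rightarrow> nat \<Rightarrow> nat \<Rightarrow> nat \<Rightarrow> flow set" where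
  "flow_bundle n i a j b = (\<lambda>k. (i, a + k, j, b + k)) ` {1..n}"

lemma finite_flow_bundle: "finite (flow_bundle n i a j b)"
  by (simp add: flow_bundle_def)

lemma card_flow_bundle: "card (flow_bundle n i a j b) = n"
  unfolding flow_bundle_def by (subst card_image) (auto simp: inj_on_def)

lemma flow_bundle_disjoint:
  "(i, j) \<noteq> (i', j') \<Longrightarrow> flow_bundle n i a j b \<inter> flow_bundle n' i' a' j' b' = {}"
  by (auto simp: flow_bundle_def)

lemma share_switch_flow_bundles_in:
  "share_switch (flow_bundle n i a j b \<union> flow_bundle n' i a' j' b')"
  unfolding share_switch_def by (auto simp: flow_bundle_def in_sw_def)

lemma share_switch_flow_bundles_out:
  "share_switch (flow_bundle n i a j b \<union> flow_bundle n' i' a' j b')"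
  unfolding share_switch_def by (auto simp: flow_bundle_def out_sw_def)

lemma F11_eq: "F11 N = flow_bundle (N div 2) 1 0 1 0"
  unfolding F11_def flow_bundle_def by auto

lemma F22_eq: "F22 N = flow_bundle (N div 2) 2 0 2 0"
  unfolding F22_def flow_bundle_def by auto

lemma X2_eq: "X2 N = flow_bundle (N div 2) 1 (N div 2) 2 (N div 2)"
  unfolding X2_def flow_bundle_def by auto

lemma Y2_eq:
  "Y2 N = flow_bundle (N div 2) 3 0 1 (N div 2) \<union> flow_bundle (N div 2) 3 (N div 2) 2 (N div 2)"
  unfolding Y2_def flow_bundle_def by auto

lemma F11_nonempty: "N \<ge> 2 \<Longrightarrow> F11 N \<noteq> {}"
  by (auto simp: F11_eq flow_bundle_def)

lemma link_disjoint_inj_on_F11_F22: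
  assumes "link_disjoint N F r" "X1 N \<subseteq> F"
  shows "inj_on r (F11 N)" "inj_on r (F22 N)"
proof -
  have "share_switch (F11 N)" "share_switch (F22 N)"
    unfolding share_switch_def by (auto simp: F11_def F22_def in_sw_def)
  then show "inj_on r (F11 N)" "inj_on r (F22 N)"
    using assms by (auto simp: X1_def intro: link_disjoint_inj_on_share_switch)
qed

lemma card_image_F11:
  assumes "link_disjoint N F r" "X1 N \<subseteq> F"
  shows "card (r ` F11 N) = N div 2"
  using link_disjoint_inj_on_F11_F22[OF assms]
  by (simp add: card_image F11_eq card_flow_bundle)

lemma link_disjoint_Xset_same_middles:
  assumes "even N" "link_disjoint N (Xset N) r"
  shows "r ` F22 N = r ` F11 N"
proof -
  have "r ` F11 N = middles N - r ` X2 N"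
    by (rule link_disjoint_complementary_images[OF assms(2)])
      (use assms(1) in \<open>auto simp: Xset_def X1_def F11_eq X2_eq finite_flow_bundle
        card_flow_bundle flow_bundle_disjoint share_switch_flow_bundles_in\<close>)
  moreover have "r ` F22 N = middles N - r ` X2 N"
    by (rule link_disjoint_complementary_images[OF assms(2)])
      (use assms(1) in \<open>auto simp: Xset_def X1_def F22_eq X2_eq finite_flow_bundle
        card_flow_bundle flow_bundle_disjoint share_switch_flow_bundles_out\<close>)
  ultimately show ?thesis by simp
qed

lemma link_disjoint_Yset_complementary_middles:
  assumes "even N" "link_disjoint N (Yset N) r"
  shows "r ` F22 N = middles N - r ` F11 N"
proof -
  define Ya where "Ya = flow_bundle (N div 2) 3 0 1 (N div 2)"
  define Yb where "Yb = flow_bundle (N div 2) 3 (N div 2) 2 (N div 2)"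
  have Y: "Yset N = F11 N \<union> F22 N \<union> Ya \<union> Yb"
    by (auto simp: Yset_def X1_def Y2_eq Ya_def Yb_def)
  have F11: "r ` F11 N = middles N - r ` Ya"
    by (rule link_disjoint_complementary_images[OF assms(2)])
      (use assms(1) in \<open>auto simp: Y Ya_def F11_eq finite_flow_bundle
        card_flow_bundle flow_bundle_disjoint share_switch_flow_bundles_out\<close>)
  have F22: "r ` F22 N = middles N - r ` Yb"
    by (rule link_disjoint_complementary_images[OF assms(2)])
      (use assms(1) in \<open>auto simp: Y Yb_def F22_eq finite_flow_bundle
        card_flow_bundle flow_bundle_disjoint share_switch_flow_bundles_out\<close>)
  have Ya: "r ` Ya = middles N - r ` Yb"
    by (rule link_disjoint_complementary_images[OF assms(2)])
      (use assms(1) in \<open>auto simp: Y Ya_def Yb_def finite_flow_bundle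
        card_flow_bundle flow_bundle_disjoint share_switch_flow_bundles_in\<close>)
  show ?thesis
    unfolding F11 F22 Ya by auto
qed

theorem mainTheorem11:
  fixes N :: nat
  assumes "N \<ge> 2" and "even N"
  shows "(\<forall>r. link_disjoint N (Xset N) r \<longrightarrow>
            inj_on r (F11 N) \<and> card (r ` F11 N) = N div 2 \<and>
            inj_on r (F22 N) \<and> r ` F22 N = r ` F11 N)
       \<and> (\<forall>r. link_disjoint N (Yset N) r \<longrightarrow>
            inj_on r (F11 N) \<and> card (r ` F11 N) = N div 2 \<and>
            inj_on r (F22 N) \<and> r ` F22 N = middles N - r ` F11 N)
       \<and> \<not> (\<exists>r. routing N (X1 N) r \<and>
            inj_on r (F11 N) \<and> inj_on r (F22 N) \<and>
            r ` F22 N = r ` F11 N \<and> r ` F22 N = middles N - r ` F11 N)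
       \<and> \<not> (\<exists>rX rY. link_disjoint N (Xset N) rX \<and> link_disjoint N (Yset N) rY \<and>
            (\<forall>f\<in>X1 N. rX f = rY f))"
proof -
  have X1_sub: "X1 N \<subseteq> Xset N" "X1 N \<subseteq> Yset N"
    by (auto simp: Xset_def Yset_def)
  have not_self_complement: "r ` F22 N \<noteq> r ` F11 N \<or> r ` F22 N \<noteq> middles N - r ` F11 N"
    for r :: "flow \<Rightarrow> nat"
    using F11_nonempty[OF assms(1)] by auto
  have no_common_X1_routing: False
    if rX: "link_disjoint N (Xset N) rX" and rY: "link_disjoint N (Yset N) rY"
      and agree: "\<forall>f\<in>X1 N. rX f = rY f" for rX rY
  proof -
    have "rX ` F11 N = rY ` F11 N" "rX ` F22 N = rY ` F22 N"
      using agree by (auto simp: X1_def intro!: image_cong)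
    then show False
      using link_disjoint_Xset_same_middles[OF assms(2) rX]
        link_disjoint_Yset_complementary_middles[OF assms(2) rY] not_self_complement by metis
  qed
  have "inj_on r (F11 N) \<and> card (r ` F11 N) = N div 2 \<and> inj_on r (F22 N)"
    if "link_disjoint N F r" "X1 N \<subseteq> F" for F r
    using that link_disjoint_inj_on_F11_F22 card_image_F11 by blast
  then show ?thesis
    using X1_sub link_disjoint_Xset_same_middles[OF assms(2)]
      link_disjoint_Yset_complementary_middles[OF assms(2)] not_self_complement no_common_X1_routing
    by meson
qed

end
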